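(* Assume $\epsilon\in[0,1/2)$ and the inlier stability condition. Then for every center $\hat\mu\in\mathbb R^p$ and every $w\in\Delta_{N,\epsilon}$, $$\Big\|\sum_{n=1}^Nw_ng_n-\mu_g\Big\|_2\le\delta_\mu+\alpha_\epsilon\sqrt{\gamma(w;\hat\mu)},\qquad \alpha_\epsilon=\sqrt{\frac{\epsilon}{1-2\epsilon}}.$$ In particular $\alpha_\epsilon<1$ whenever $\epsilon<1/3$.
   Context: Fix $N\ge1$, $p\ge1$, $\epsilon\in[0,1)$ and vectors $g_1,\dots,g_N\in\mathbb R^p$. For an index set $I$ and $\epsilon'\in[0,1)$, $\Delta_{I,\epsilon'}=\{w\in\mathbb R^{I}:\sum_{n\in I}w_n=1,\ 0\le w_n\le\frac1{(1-\epsilon')|I|}\}$, and $\Delta_{N,\epsilon}=\Delta_{[N],\epsilon}$. For $\hat\mu\in\mathbb R^p$, $S(w;\hat\mu)=\sum_n w_n(g_n-\hat\mu)(g_n-\hat\mu)^\top$ and $\gamma(w;\hat\mu)=\|S(w;\hat\mu)\|_{op}$ (largest eigenvalue). Inlier stability condition: there is a partition $[N]=I_{in}\sqcup I_{out}$ with $|I_{out}|\le\epsilon N$, a vector $\mu_g\in\mathbb R^p$, a symmetric PSD matrix $\Sigma_g$ and constants $\delta_\mu,\delta_\Sigma\ge0$ such that for every $w\in\Delta_{I_{in},\epsilon/(1-\epsilon)}$: $\|\sum_{n\in I_{in}}w_n(g_n-\mu_g)\|_2\le\delta_\mu$ and $\sum_{n\in I_{in}}w_n(g_n-\mu_g)(g_n-\mu_g)^\top\preceq\Sigma_g+\delta_\Sigma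 I_p$. *)

theory Defs
  imports "HOL-Analysis.Analysis"
begin

definition outer :: "real^'p \<Rightarrow> real^'p \<Rightarrow> real^'p^'p" where
  "outer x y = (\<chi> i j. x $ i * y $ j)"

definition capped_simplex :: "nat set \<Rightarrow> real \<Rightarrow> (nat \<Rightarrow> real) \<Rightarrow> bool" where
  "capped_simplex I e w \<longleftrightarrow> (\<Sum>n\<in>I. w n) = 1 \<and>
     (\<forall>n\<in>I. 0 \<le> w n \<and> w n \<le> 1 / ((1 - e) * real (card I)))"

definition Smat :: "nat \<Rightarrow> (nat \<Rightarrow> real^'p) \<Rightarrow> (nat \<Rightarrow> real) \<Rightarrow> real^'p \<Rightarrow> real^'p^'p" where
  "Smat N g w mu = (\<Sum>n\<in>{1..N}. w n *\<^sub>R outer (g n - mu) (g n - mu))"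

definition gamma :: "nat \<Rightarrow> (nat \<Rightarrow> real^'p) \<Rightarrow> (nat \<Rightarrow> real) \<Rightarrow> real^'p \<Rightarrow> real" where
  "gamma N g w mu = onorm (\<lambda>x. Smat N g w mu *v x)"

definition loewner_le :: "real^'p^'p \<Rightarrow> real^'p^'p \<Rightarrow> bool" where
  "loewner_le A B \<longleftrightarrow> (\<forall>v. v \<bullet> (A *v v) \<le> v \<bullet> (B *v v))"

definition psd_sym :: "real^'p^'p \<Rightarrow> bool" where
  "psd_sym A \<longleftrightarrow> transpose A = A \<and> (\<forall>v. 0 \<le> v \<bullet> (A *v v))"

definition inlier_stable ::
  "nat \<Rightarrow> real \<Rightarrow> (nat \<Rightarrow> real^'p) \<Rightarrow> real^'p \<Rightarrow> real^'p^'p \<Rightarrow> real \<Rightarrow> real \<Rightarrow> bool" where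
  "inlier_stable N eps g mu_g Sigma_g d_mu d_Sigma \<longleftrightarrow>
     (\<exists>I_in I_out. I_in \<union> I_out = {1..N} \<and> I_in \<inter> I_out = {} \<and>
        real (card I_out) \<le> eps * real N \<and>
        (\<forall>w. capped_simplex I_in (eps / (1 - eps)) w \<longrightarrow>
           norm (\<Sum>n\<in>I_in. w n *\<^sub>R (g n - mu_g)) \<le> d_mu \<and>
           loewner_le (\<Sum>n\<in>I_in. w n *\<^sub>R outer (g n - mu_g) (g n - mu_g))
                      (Sigma_g + d_Sigma *\<^sub>R mat 1)))"

end

(*
  Let A be the w-mass of the inliers and B = 1 - A that of the outliers.  Every weight is at
  most 1/((1 - eps) N) and there are at most eps N outliers, so B <= eps/(1 - eps); hence
  (1 - 2 eps) <= (1 - eps) A, and w renormalised on the inliers lies in the capped simplex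
  with parameter eps/(1 - eps).  Stability therefore puts the inlier mean within d_mu of mu_g.

  It remains to compare the full weighted mean with the inlier mean.  Projecting their
  difference onto its own direction u reduces everything to the scalars z_n = u.(g_n - mu_hat).
  With x, y the inlier and outlier parts of sum w_n z_n, A times the projected difference is
  A y - B x, and (A y - B x)^2 + A B (x + y)^2 = B x^2 + A y^2 together with Cauchy-Schwarz on
  each part bounds its square by A B sum w_n z_n^2 <= A B gamma(w; mu_hat).  Finally
  B/A <= eps/(1 - 2 eps).
*)
theory Submission
  imports Defs
begin

lemma capped_simplex_sum_le:
  assumes "capped_simplex U e w" "J \<subseteq> U"
  shows "(\<Sum>n\<in>J. w n) \<le> real (card J) / ((1 - e) * real (card U))"
  using assms sum_bounded_above[of J w "1 / ((1 - e) * real (card U))"]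
  unfolding capped_simplex_def by auto

lemma capped_simplex_subset_mass:
  assumes "capped_simplex U e w" "finite U" "I \<subseteq> U" "e < 1"
  shows "real (card I) - e * real (card U) \<le> (1 - e) * real (card U) * (\<Sum>n\<in>I. w n)"
proof -
  define D where "D = (1 - e) * real (card U)"
  define B where "B = (\<Sum>n\<in>U - I. w n)"
  have "U \<noteq> {}"
    using assms(1) unfolding capped_simplex_def by auto
  then have "D > 0"
    unfolding D_def using assms(2,4) by (simp add: card_gt_0_iff)
  have "real (card I) - e * real (card U) = D - real (card (U - I))"
    using assms(2,3) unfolding D_def
    by (simp add: card_Diff_subset finite_subset card_mono algebra_simps)
  also have "\<dots> \<le> D - B * D"
    using capped_simplex_sum_le[OF assms(1), of "U - I"] \<open>D > 0\<close>
    unfolding B_def D_def by (simp add: pos_le_divide_eq)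
  also have "\<dots> = D * (\<Sum>n\<in>I. w n)"
  proof -
    have "(\<Sum>n\<in>I. w n) = 1 - B"
      using assms(1-3) sum.subset_diff[of I U w] unfolding capped_simplex_def B_def by simp
    then show ?thesis
      by (simp add: right_diff_distrib mult.commute)
  qed
  finally show ?thesis
    unfolding D_def .
qed

lemma capped_simplex_inlier_mass:
  assumes "capped_simplex U e w" "finite U" "I \<subseteq> U"
    and "real (card (U - I)) \<le> e * real (card U)" "e < 1"
  shows "1 - 2 * e \<le> (1 - e) * (\<Sum>n\<in>I. w n)"
proof -
  have "card U > 0"
    using assms(1,2) unfolding capped_simplex_def by (auto simp: card_gt_0_iff)
  have "real (card (U - I)) = real (card U) - real (card I)"
    using assms(2,3) by (simp add: card_Diff_subset finite_subset card_mono)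
  then have "(1 - 2 * e) * real (card U) \<le> ((1 - e) * (\<Sum>n\<in>I. w n)) * real (card U)"
    using capped_simplex_subset_mass[OF assms(1-3,5)] assms(4) by (simp add: algebra_simps)
  then show ?thesis
    using \<open>card U > 0\<close> by simp
qed

lemma capped_simplex_weight_le_subset_mass:
  assumes "capped_simplex U e w" "finite U" "I \<subseteq> U" "e < 1" "n \<in> I"
  shows "w n * (real (card I) - e * real (card U)) \<le> (\<Sum>m\<in>I. w m)"
proof -
  define D where "D = (1 - e) * real (card U)"
  have "card U > 0"
    using assms(2,3,5) by (auto simp: card_gt_0_iff)
  then have "D > 0"
    unfolding D_def using assms(4) by simp
  then have "0 \<le> w n" "w n * D \<le> 1"
    using assms(1,3,5) unfolding capped_simplex_def D_def by (auto simp: pos_le_divide_eq)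
  have "0 \<le> (\<Sum>m\<in>I. w m)"
    using assms(1,3) unfolding capped_simplex_def by (auto intro: sum_nonneg)
  have "w n * (real (card I) - e * real (card U)) \<le> w n * (D * (\<Sum>m\<in>I. w m))"
    using capped_simplex_subset_mass[OF assms(1-4)] \<open>0 \<le> w n\<close>
    unfolding D_def by (rule mult_left_mono)
  also have "\<dots> = (w n * D) * (\<Sum>m\<in>I. w m)"
    by (simp only: mult_ac)
  also have "\<dots> \<le> (\<Sum>m\<in>I. w m)"
    using mult_right_mono[OF \<open>w n * D \<le> 1\<close> \<open>0 \<le> (\<Sum>m\<in>I. w m)\<close>] by simp
  finally show ?thesis .
qed

lemma capped_simplex_renormalize:
  assumes "capped_simplex U e w" "finite U" "I \<subseteq> U"
    and "real (card (U - I)) \<le> e * real (card U)" "0 \<le> e" "e < 1/2"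
  shows "capped_simplex I (e / (1 - e)) (\<lambda>n. w n / (\<Sum>m\<in>I. w m))"
proof -
  define A where "A = (\<Sum>n\<in>I. w n)"
  define k where "k = real (card I)"
  define M where "M = real (card U)"
  have "0 < (1 - e) * A"
    using capped_simplex_inlier_mass[OF assms(1-4)] assms(6) unfolding A_def by linarith
  then have "A > 0"
    using assms(6) by (simp add: zero_less_mult_iff)
  have "real (card (U - I)) = M - k"
    unfolding M_def k_def using assms(2,3)
    by (simp add: card_Diff_subset finite_subset card_mono)
  then have "(1 - e) * M \<le> k"
    using assms(4) unfolding M_def by (simp add: algebra_simps)
  have "M > 0"
    using assms(1,2) unfolding M_def capped_simplex_def by (auto simp: card_gt_0_iff)
  then have "0 < k"
    using \<open>(1 - e) * M \<le> k\<close> assms(6) mult_pos_pos[of "1 - e" M] by linarith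
  show ?thesis
    unfolding capped_simplex_def
  proof (intro conjI ballI)
    show "(\<Sum>n\<in>I. w n / (\<Sum>m\<in>I. w m)) = 1"
      using \<open>A > 0\<close> unfolding A_def by (simp flip: sum_divide_distrib)
  next
    fix n assume "n \<in> I"
    then have "0 \<le> w n"
      using assms(1,3) unfolding capped_simplex_def by auto
    then show "0 \<le> w n / (\<Sum>m\<in>I. w m)"
      using \<open>A > 0\<close> unfolding A_def by simp
    have "(1 - 2 * e) * k \<le> (1 - e) * (k - e * M)"
      using \<open>(1 - e) * M \<le> k\<close> assms(5) mult_left_mono[of "(1 - e) * M" k e]
      by (simp add: algebra_simps)
    then have "w n * ((1 - 2 * e) * k) \<le> w n * ((1 - e) * (k - e * M))"
      using \<open>0 \<le> w n\<close> by (rule mult_left_mono)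
    also have "\<dots> = (1 - e) * (w n * (k - e * M))"
      by (simp only: mult_ac)
    also have "\<dots> \<le> (1 - e) * A"
      using capped_simplex_weight_le_subset_mass[OF assms(1-3) _ \<open>n \<in> I\<close>] assms(6)
      unfolding A_def k_def M_def by (intro mult_left_mono) simp_all
    finally have "w n / A \<le> (1 - e) / ((1 - 2 * e) * k)"
      using \<open>A > 0\<close> \<open>0 < k\<close> assms(6) by (simp add: pos_divide_le_eq pos_le_divide_eq)
    also have "\<dots> = 1 / ((1 - e / (1 - e)) * real (card I))"
      unfolding k_def using assms(6) by (simp add: field_simps)
    finally show "w n / (\<Sum>m\<in>I. w m) \<le> 1 / ((1 - e / (1 - e)) * real (card I))"
      unfolding A_def .
  qed
qed

lemma weighted_Cauchy_Schwarz:
  fixes w z :: "'a \<Rightarrow> real"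
  assumes "\<forall>n\<in>S. 0 \<le> w n"
  shows "(\<Sum>n\<in>S. w n * z n)\<^sup>2 \<le> (\<Sum>n\<in>S. w n) * (\<Sum>n\<in>S. w n * (z n)\<^sup>2)"
proof -
  have "(\<Sum>n\<in>S. w n * z n) = (\<Sum>n\<in>S. sqrt (w n) * (sqrt (w n) * z n))"
    using assms by (intro sum.cong) (simp_all flip: mult.assoc)
  also have "\<dots>\<^sup>2 \<le> (\<Sum>n\<in>S. (sqrt (w n))\<^sup>2) * (\<Sum>n\<in>S. (sqrt (w n) * z n)\<^sup>2)"
    by (rule Cauchy_Schwarz_ineq_sum)
  also have "\<dots> = (\<Sum>n\<in>S. w n) * (\<Sum>n\<in>S. w n * (z n)\<^sup>2)"
    using assms by (simp add: power_mult_distrib)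
  finally show ?thesis .
qed

lemma subset_mean_deviation:
  fixes w z :: "'a \<Rightarrow> real"
  assumes "finite U" "I \<subseteq> U" "\<forall>n\<in>U. 0 \<le> w n" "(\<Sum>n\<in>U. w n) = 1"
    and A_def: "A = (\<Sum>n\<in>I. w n)"
  shows "(A * (\<Sum>n\<in>U. w n * z n) - (\<Sum>n\<in>I. w n * z n))\<^sup>2
           \<le> A * (1 - A) * (\<Sum>n\<in>U. w n * (z n)\<^sup>2)"
proof -
  define x y where "x = (\<Sum>n\<in>I. w n * z n)" and "y = (\<Sum>n\<in>U - I. w n * z n)"
  define B where "B = (\<Sum>n\<in>U - I. w n)"
  have split: "(\<Sum>n\<in>U. f n) = (\<Sum>n\<in>I. f n) + (\<Sum>n\<in>U - I. f n)" for f :: "'a \<Rightarrow> real"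
    using assms(1,2) by (metis add.commute sum.subset_diff)
  have AB: "A + B = 1"
    using split[of w] assms(4) unfolding A_def B_def by simp
  then have B_eq: "B = 1 - A" by simp
  have "A \<ge> 0" "B \<ge> 0"
    using assms(2,3) unfolding A_def B_def by (auto intro: sum_nonneg)
  have x: "x\<^sup>2 \<le> A * (\<Sum>n\<in>I. w n * (z n)\<^sup>2)"
    unfolding x_def A_def using assms(2,3) by (intro weighted_Cauchy_Schwarz) auto
  have y: "y\<^sup>2 \<le> B * (\<Sum>n\<in>U - I. w n * (z n)\<^sup>2)"
    unfolding y_def B_def using assms(3) by (intro weighted_Cauchy_Schwarz) auto
  have "(A * (\<Sum>n\<in>U. w n * z n) - x)\<^sup>2 = (A * y - B * x)\<^sup>2"
    unfolding split[of "\<lambda>n. w n * z n"] x_def y_def using AB by algebra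
  also have "\<dots> \<le> B * x\<^sup>2 + A * y\<^sup>2"
  proof -
    have "(A * y - B * x)\<^sup>2 + A * B * (x + y)\<^sup>2 = B * x\<^sup>2 + A * y\<^sup>2"
      using AB by algebra
    moreover have "0 \<le> A * B * (x + y)\<^sup>2"
      using \<open>A \<ge> 0\<close> \<open>B \<ge> 0\<close> by simp
    ultimately show ?thesis by linarith
  qed
  also have "\<dots> \<le> A * B * (\<Sum>n\<in>U. w n * (z n)\<^sup>2)"
    unfolding split[of "\<lambda>n. w n * (z n)\<^sup>2"]
    using mult_left_mono[OF x \<open>B \<ge> 0\<close>] mult_left_mono[OF y \<open>A \<ge> 0\<close>]
    by (simp add: algebra_simps)
  finally show ?thesis
    unfolding x_def B_eq .
qed

lemma sum_matrix_vector_mult: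
  "finite S \<Longrightarrow> (\<Sum>n\<in>S. M n) *v x = (\<Sum>n\<in>S. M n *v (x :: 'a::comm_semiring_1^'m))"
  by (induction S rule: finite_induct) (simp_all add: matrix_vector_mult_add_rdistrib)

lemma outer_self_matrix_vector_mult: "outer v v *v u = (v \<bullet> u) *\<^sub>R (v :: real^'p)"
  by (simp add: vec_eq_iff matrix_vector_mult_def outer_def inner_vec_def
      sum_distrib_left algebra_simps)

lemma Smat_quadratic_form:
  "u \<bullet> (Smat N g w mu *v u) = (\<Sum>n\<in>{1..N}. w n * (u \<bullet> (g n - mu))\<^sup>2)"
  unfolding Smat_def
  by (simp add: sum_matrix_vector_mult outer_self_matrix_vector_mult inner_sum_right
      power2_eq_square inner_commute mult.assoc flip: scaleR_matrix_vector_assoc)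

lemma quadratic_form_le_onorm:
  fixes A :: "real^'n^'n"
  shows "u \<bullet> (A *v u) \<le> onorm ((*v) A) * (norm u)\<^sup>2"
proof -
  have "u \<bullet> (A *v u) \<le> norm u * norm (A *v u)"
    by (rule norm_cauchy_schwarz)
  also have "\<dots> \<le> norm u * (onorm ((*v) A) * norm u)"
    by (intro mult_left_mono onorm) auto
  finally show ?thesis
    by (simp add: power2_eq_square algebra_simps)
qed

lemma gamma_nonneg: "0 \<le> gamma N g w mu"
  unfolding gamma_def by (rule onorm_pos_le) simp

lemma subset_mean_deviation_le_gamma:
  fixes g :: "nat \<Rightarrow> real^'p"
  assumes "I \<subseteq> {1..N}" "\<forall>n\<in>{1..N}. 0 \<le> w n" "(\<Sum>n\<in>{1..N}. w n) = 1"
    and "A = (\<Sum>n\<in>I. w n)" "A > 0"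
  shows "A * (norm ((\<Sum>n\<in>{1..N}. w n *\<^sub>R g n) - (\<Sum>n\<in>I. w n *\<^sub>R g n) /\<^sub>R A))\<^sup>2
           \<le> (1 - A) * gamma N g w mu"
proof -
  define m where "m = (\<Sum>n\<in>{1..N}. w n *\<^sub>R g n) - (\<Sum>n\<in>I. w n *\<^sub>R g n) /\<^sub>R A"
  have "A \<le> 1"
    using assms(1-4) sum_mono2[of "{1..N}" I w] by auto
  then have "0 \<le> (1 - A) * gamma N g w mu"
    using gamma_nonneg[of N g w mu] by simp
  moreover have "A * (norm m)\<^sup>2 \<le> (1 - A) * gamma N g w mu" if "m \<noteq> 0"
  proof -
    define u where "u = m /\<^sub>R norm m"
    define z where "z n = u \<bullet> (g n - mu)" for n
    have "norm u = 1"
      unfolding u_def using that by simp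
    have "A * (\<Sum>n\<in>{1..N}. w n * z n) - (\<Sum>n\<in>I. w n * z n) = A * (u \<bullet> m)"
      unfolding z_def m_def using assms(3-5)
      by (simp add: inner_sum_right sum_subtractf algebra_simps
          flip: sum_distrib_left sum_distrib_right)
    also have "u \<bullet> m = norm m"
      unfolding u_def using that by (simp add: power2_norm_eq_inner[symmetric] power2_eq_square)
    finally have "A * (A * (norm m)\<^sup>2) \<le> A * ((1 - A) * (\<Sum>n\<in>{1..N}. w n * (z n)\<^sup>2))"
      using subset_mean_deviation[of "{1..N}" I w A z] assms(1-4)
      by (simp add: power2_eq_square algebra_simps)
    then have "A * (norm m)\<^sup>2 \<le> (1 - A) * (\<Sum>n\<in>{1..N}. w n * (z n)\<^sup>2)"
      using \<open>A > 0\<close> by simp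
    also have "(\<Sum>n\<in>{1..N}. w n * (z n)\<^sup>2) \<le> gamma N g w mu"
      using quadratic_form_le_onorm[of u "Smat N g w mu"] \<open>norm u = 1\<close>
      unfolding z_def Smat_quadratic_form gamma_def by simp
    finally show ?thesis
      using \<open>A \<le> 1\<close> by (simp add: mult_left_mono)
  qed
  ultimately show ?thesis
    unfolding m_def[symmetric] by fastforce
qed

lemma subset_mean_deviation_le_sqrt_gamma:
  fixes g :: "nat \<Rightarrow> real^'p"
  assumes "I \<subseteq> {1..N}" "\<forall>n\<in>{1..N}. 0 \<le> w n" "(\<Sum>n\<in>{1..N}. w n) = 1"
    and "A = (\<Sum>n\<in>I. w n)" "1 - 2 * e \<le> (1 - e) * A" "0 \<le> e" "e < 1/2"
  shows "norm ((\<Sum>n\<in>{1..N}. w n *\<^sub>R g n) - (\<Sum>n\<in>I. w n *\<^sub>R g n) /\<^sub>R A)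
           \<le> sqrt (e / (1 - 2 * e)) * sqrt (gamma N g w mu)"
proof -
  define d where "d = norm ((\<Sum>n\<in>{1..N}. w n *\<^sub>R g n) - (\<Sum>n\<in>I. w n *\<^sub>R g n) /\<^sub>R A)"
  have "0 < (1 - e) * A"
    using assms(5,7) by linarith
  then have "A > 0"
    using assms(7) by (simp add: zero_less_mult_iff)
  have "A * d\<^sup>2 \<le> (1 - A) * gamma N g w mu"
    using subset_mean_deviation_le_gamma[OF assms(1-4) \<open>A > 0\<close>] unfolding d_def .
  then have "A * d\<^sup>2 * (1 - 2 * e) \<le> ((1 - A) * (1 - 2 * e)) * gamma N g w mu"
    using assms(7) by (simp add: mult_right_mono mult_ac)
  also have "\<dots> \<le> (A * e) * gamma N g w mu"
    using assms(5) gamma_nonneg[of N g w mu]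
    by (intro mult_right_mono) (simp_all add: algebra_simps)
  finally have "A * (d\<^sup>2 * (1 - 2 * e)) \<le> A * (e * gamma N g w mu)"
    by (simp only: mult_ac)
  then have "d\<^sup>2 * (1 - 2 * e) \<le> e * gamma N g w mu"
    using \<open>A > 0\<close> by simp
  then have "d\<^sup>2 \<le> e / (1 - 2 * e) * gamma N g w mu"
    using assms(7) by (simp add: field_simps)
  then have "d \<le> sqrt (e / (1 - 2 * e) * gamma N g w mu)"
    using real_le_rsqrt by blast
  then show ?thesis
    unfolding d_def real_sqrt_mult .
qed

lemma inlier_stable_inlier_mean:
  assumes "inlier_stable N eps g mu_g Sigma_g d_mu d_Sigma" "capped_simplex {1..N} eps w"
    and "0 \<le> eps" "eps < 1/2"
  obtains I where "I \<subseteq> {1..N}" "1 - 2 * eps \<le> (1 - eps) * (\<Sum>n\<in>I. w n)"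
    and "norm ((\<Sum>n\<in>I. w n *\<^sub>R g n) /\<^sub>R (\<Sum>n\<in>I. w n) - mu_g) \<le> d_mu"
proof -
  obtain I_in I_out where "I_in \<union> I_out = {1..N}" "I_in \<inter> I_out = {}"
    and card_out: "real (card I_out) \<le> eps * real N"
    and stable: "\<And>v. capped_simplex I_in (eps / (1 - eps)) v \<Longrightarrow>
                   norm (\<Sum>n\<in>I_in. v n *\<^sub>R (g n - mu_g)) \<le> d_mu"
    using assms(1) unfolding inlier_stable_def by blast
  then have "I_in \<subseteq> {1..N}" "{1..N} - I_in = I_out"
    by blast+
  with card_out have I_in: "I_in \<subseteq> {1..N}"
    "real (card ({1..N} - I_in)) \<le> eps * real (card {1..N})"
    by simp_all
  define A where "A = (\<Sum>n\<in>I_in. w n)"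
  have mass: "1 - 2 * eps \<le> (1 - eps) * A"
    unfolding A_def using capped_simplex_inlier_mass[OF assms(2) _ I_in] assms(4) by simp
  then have "A \<noteq> 0"
    using assms(4) by auto
  then have "(\<Sum>n\<in>I_in. w n / A) = 1"
    unfolding A_def by (simp flip: sum_divide_distrib)
  then have "(\<Sum>n\<in>I_in. (w n / A) *\<^sub>R (g n - mu_g)) = (\<Sum>n\<in>I_in. w n *\<^sub>R g n) /\<^sub>R A - mu_g"
    by (simp add: scaleR_diff_right sum_subtractf scaleR_sum_right divide_inverse_commute
        flip: scaleR_sum_left)
  then have "norm ((\<Sum>n\<in>I_in. w n *\<^sub>R g n) /\<^sub>R A - mu_g) \<le> d_mu"
    using stable[OF capped_simplex_renormalize[OF assms(2) _ I_in assms(3,4)]]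
    unfolding A_def by simp
  with I_in(1) mass show ?thesis
    unfolding A_def by (rule that)
qed

theorem mainTheorem9:
  fixes N :: nat and eps :: real and g :: "nat \<Rightarrow> real^'p"
    and mu_g :: "real^'p" and Sigma_g :: "real^'p^'p" and d_mu d_Sigma :: real
  assumes "N \<ge> 1" and "0 \<le> eps" and "eps < 1/2"
    and "psd_sym Sigma_g" and "d_mu \<ge> 0" and "d_Sigma \<ge> 0"
    and "inlier_stable N eps g mu_g Sigma_g d_mu d_Sigma"
  shows "(\<forall>mu_hat w. capped_simplex {1..N} eps w \<longrightarrow>
            norm ((\<Sum>n\<in>{1..N}. w n *\<^sub>R g n) - mu_g)
              \<le> d_mu + sqrt (eps / (1 - 2 * eps)) * sqrt (gamma N g w mu_hat))
         \<and> (eps < 1/3 \<longrightarrow> sqrt (eps / (1 - 2 * eps)) < 1)"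
proof (intro conjI allI impI)
  assume "eps < 1/3"
  then show "sqrt (eps / (1 - 2 * eps)) < 1"
    using assms(3) by (simp add: field_simps)
next
  fix mu_hat and w :: "nat \<Rightarrow> real"
  assume w: "capped_simplex {1..N} eps w"
  then obtain I where I: "I \<subseteq> {1..N}" "1 - 2 * eps \<le> (1 - eps) * (\<Sum>n\<in>I. w n)"
    and inlier_mean: "norm ((\<Sum>n\<in>I. w n *\<^sub>R g n) /\<^sub>R (\<Sum>n\<in>I. w n) - mu_g) \<le> d_mu"
    using inlier_stable_inlier_mean[OF assms(7) _ assms(2,3)] by blast
  have "\<forall>n\<in>{1..N}. 0 \<le> w n" "(\<Sum>n\<in>{1..N}. w n) = 1"
    using w unfolding capped_simplex_def by auto
  from subset_mean_deviation_le_sqrt_gamma[OF I(1) this refl I(2) assms(2,3)] inlier_mean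
  have "norm ((\<Sum>n\<in>{1..N}. w n *\<^sub>R g n) - mu_g)
          \<le> sqrt (eps / (1 - 2 * eps)) * sqrt (gamma N g w mu_hat) + d_mu"
    by (rule norm_diff_triangle_le)
  then show "norm ((\<Sum>n\<in>{1..N}. w n *\<^sub>R g n) - mu_g)
               \<le> d_mu + sqrt (eps / (1 - 2 * eps)) * sqrt (gamma N g w mu_hat)"
    by linarith
qed

end
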